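(* Let $(H,\partial)$ be a Cartan–Eilenberg system with associated spectral sequence $(E^r,d^r)_{r\ge1}$. Suppose there are integers $a$ and $b$ such that $d^r_s\colon E^r_s\to E^r_{s-r}$ is zero whenever $s-r\le a$ and $s>b$. Then $\ker(\kappa)=0$, where $\kappa\colon\operatorname{colim}_j\lim_iH(i,j)\to\lim_i\operatorname{colim}_jH(i,j)$ is the interchange morphism.
   Context: Let $\mathcal{A}$ be the abelian category of $\mathbb{Z}$-graded modules over a ring $R$. A Cartan–Eilenberg system $(H,\partial)$ consists of objects $H(i,j)\in\mathcal{A}$ for integers $i\le j$, functorial morphisms $\eta\colon H(i,j)\to H(i',j')$ of internal degree $0$ for $i\le i'$, $j\le j'$, and natural morphisms $\partial\colon H(j,k)\to H(i,j)$ of internal degree $-1$ for $i\le j\le k$ (commuting with $\eta$), such that $H(i,j)\xrightarrow{\eta}H(i,k)\xrightarrow{\eta}H(j,k)\xrightarrow{\partial}H(i,j)$ is exact at each vertex. Its spectral sequence: $E^1_s=H(s-1,s)$; for $r\ge1$, $Z^r_s=\ker(\partial\colon E^1_s\to H(s-r,s-1))$, $B^r_s=\operatorname{im}(\partial\colon H(s,s+r-1)\to E^1_s)$, $E^r_s=Z^r_s/B^r_s$, and $d^r_s\colon E^r_s\to E^r_{s-r}$ is $[x]\mapsto[\partial(\tilde x)]$, where $x\in Z^r_s$, $\tilde x\in H(s-r,s)$ with $\eta(\tilde x)=x$, and $\partial\colon H(s-r,s)\to H(s-r-1,s-r)=E^1_{s-r}$. Limits over $i$ are along $\eta\colon H(i-1,j)\to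 H(i,j)$ as $i\to-\infty$, colimits over $j$ along $\eta\colon H(i,j)\to H(i,j+1)$. The interchange morphism $\kappa$ is the canonical morphism whose restriction to $\lim_iH(i,j)$ followed by projection to $\operatorname{colim}_jH(i,j)$ is $\lim_iH(i,j)\to H(i,j)\to\operatorname{colim}_jH(i,j)$. *)

theory Defs
  imports Main
begin

text \<open>A Z-graded R-module M is modelled as a family of submodules M n (n the internal
degree) of an ambient left R-module 'a (scalar action sc). A morphism of internal degree d
is a family of R-linear maps f n : M n -> N (n + d).\<close>

definition is_lmodule :: "('r::ring_1 \<Rightarrow> 'a::ab_group_add \<Rightarrow> 'a) \<Rightarrow> bool" where
  "is_lmodule sc \<equiv>
     (\<forall>c x y. sc c (x + y) = sc c x + sc c y) \<and>
     (\<forall>c d x. sc (c + d) x = sc c x + sc d x) \<and>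
     (\<forall>c d x. sc (c * d) x = sc c (sc d x)) \<and>
     (\<forall>x. sc 1 x = x)"

definition submodule :: "('r::ring_1 \<Rightarrow> 'a::ab_group_add \<Rightarrow> 'a) \<Rightarrow> 'a set \<Rightarrow> bool" where
  "submodule sc M \<equiv> 0 \<in> M \<and> (\<forall>x\<in>M. \<forall>y\<in>M. x + y \<in> M) \<and> (\<forall>x\<in>M. - x \<in> M)
     \<and> (\<forall>c. \<forall>x\<in>M. sc c x \<in> M)"

definition linmap :: "('r::ring_1 \<Rightarrow> 'a::ab_group_add \<Rightarrow> 'a) \<Rightarrow> 'a set \<Rightarrow> 'a set \<Rightarrow> ('a \<Rightarrow> 'a) \<Rightarrow> bool" where
  "linmap sc M N f \<equiv> (\<forall>x\<in>M. f x \<in> N) \<and> (\<forall>x\<in>M. \<forall>y\<in>M. f (x + y) = f x + f y)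
     \<and> (\<forall>c. \<forall>x\<in>M. f (sc c x) = sc c (f x))"

definition exact_at :: "'a set \<Rightarrow> 'a set \<Rightarrow> 'a set \<Rightarrow> ('a \<Rightarrow> 'a) \<Rightarrow> ('a \<Rightarrow> 'a::zero) \<Rightarrow> bool" where
  "exact_at A B C f g \<equiv> {y \<in> B. g y = 0} = f ` A"

text \<open>H i j n = degree-n part of H(i,j);
  eta i j i' j' n : H(i,j)_n -> H(i',j')_n  (internal degree 0);
  del i j k n : H(j,k)_n -> H(i,j)_(n-1)   (internal degree -1).\<close>

definition CE_system ::
  "('r::ring_1 \<Rightarrow> 'a::ab_group_add \<Rightarrow> 'a) \<Rightarrow> (int \<Rightarrow> int \<Rightarrow> int \<Rightarrow> 'a set)
   \<Rightarrow> (int \<Rightarrow> int \<Rightarrow> int \<Rightarrow> int \<Rightarrow> int \<Rightarrow> 'a \<Rightarrow> 'a) \<Rightarrow> (int \<Rightarrow> int \<Rightarrow> int \<Rightarrow> int \<Rightarrow> 'a \<Rightarrow> 'a) \<Rightarrow> bool"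
where
  "CE_system sc H eta del \<equiv>
     is_lmodule sc \<and>
     (\<forall>i j n. i \<le> j \<longrightarrow> submodule sc (H i j n)) \<and>
     (\<forall>i j i' j' n. i \<le> j \<and> i \<le> i' \<and> j \<le> j' \<and> i' \<le> j' \<longrightarrow>
        linmap sc (H i j n) (H i' j' n) (eta i j i' j' n)) \<and>
     (\<forall>i j n. i \<le> j \<longrightarrow> (\<forall>x\<in>H i j n. eta i j i j n x = x)) \<and>
     (\<forall>i j i' j' i'' j'' n. i \<le> j \<and> i \<le> i' \<and> j \<le> j' \<and> i' \<le> j' \<and> i' \<le> i'' \<and> j' \<le> j'' \<and> i'' \<le> j'' \<longrightarrow>
        (\<forall>x\<in>H i j n. eta i' j' i'' j'' n (eta i j i' j' n x) = eta i j i'' j'' n x)) \<and>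
     (\<forall>i j k n. i \<le> j \<and> j \<le> k \<longrightarrow> linmap sc (H j k n) (H i j (n - 1)) (del i j k n)) \<and>
     (\<forall>i j k i' j' k' n. i \<le> j \<and> j \<le> k \<and> i' \<le> j' \<and> j' \<le> k' \<and> i \<le> i' \<and> j \<le> j' \<and> k \<le> k' \<longrightarrow>
        (\<forall>x\<in>H j k n. eta i j i' j' (n - 1) (del i j k n x) = del i' j' k' n (eta j k j' k' n x))) \<and>
     (\<forall>i j k n. i \<le> j \<and> j \<le> k \<longrightarrow>
        exact_at (H i j n) (H i k n) (H j k n) (eta i j i k n) (eta i k j k n) \<and>
        exact_at (H i k n) (H j k n) (H i j (n - 1)) (eta i k j k n) (del i j k n) \<and>
        exact_at (H j k (n + 1)) (H i j n) (H i k n) (del i j k (n + 1)) (eta i j i k n))"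

definition Zr :: "(int \<Rightarrow> int \<Rightarrow> int \<Rightarrow> 'a::ab_group_add set) \<Rightarrow> (int \<Rightarrow> int \<Rightarrow> int \<Rightarrow> int \<Rightarrow> 'a \<Rightarrow> 'a)
    \<Rightarrow> int \<Rightarrow> int \<Rightarrow> int \<Rightarrow> 'a set" where
  "Zr H del r s n = {x \<in> H (s - 1) s n. del (s - r) (s - 1) s n x = 0}"

definition Br :: "(int \<Rightarrow> int \<Rightarrow> int \<Rightarrow> 'a::ab_group_add set) \<Rightarrow> (int \<Rightarrow> int \<Rightarrow> int \<Rightarrow> int \<Rightarrow> 'a \<Rightarrow> 'a)
    \<Rightarrow> int \<Rightarrow> int \<Rightarrow> int \<Rightarrow> 'a set" where
  "Br H del r s n = del (s - 1) s (s + r - 1) (n + 1) ` H s (s + r - 1) (n + 1)"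

definition coset_of :: "'a::ab_group_add set \<Rightarrow> 'a \<Rightarrow> 'a set" where
  "coset_of B x = (\<lambda>b. x + b) ` B"

text \<open>E^r_s in internal degree n, as the set of cosets Z/B; the zero element is the coset B.\<close>
definition Er where
  "Er H del r s n = coset_of (Br H del r s n) ` Zr H del r s n"

text \<open>d^r_s : E^r_s (degree n) -> E^r_(s-r) (degree n-1), [x] |-> [del(x~)], x~ a lift of x.\<close>
definition dr where
  "dr H eta del r s n X =
     coset_of (Br H del r (s - r) (n - 1))
       (del (s - r - 1) (s - r) s n
         (SOME y. y \<in> H (s - r) s n \<and>
                  eta (s - r) s (s - 1) s n y = (SOME x. x \<in> X \<and> x \<in> Zr H del r s n)))"

text \<open>lim_i H(i,j) in degree n: compatible families (x_i)_(i<=j) along eta : H(i-1,j) -> H(i,j)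
  (entries for i > j are set to 0).\<close>
definition limH where
  "limH H eta j n = {x :: int \<Rightarrow> 'a::ab_group_add.
      (\<forall>i\<le>j. x i \<in> H i j n \<and> x i = eta (i - 1) j i j n (x (i - 1))) \<and> (\<forall>i>j. x i = 0)}"

text \<open>Induced map lim_i H(i,j) -> lim_i H(i,k) for j <= k.\<close>
definition limeta where
  "limeta eta j k n x = (\<lambda>i. if i \<le> k then eta (min i j) j i k n (x (min i j)) else 0)"

text \<open>Directed colimit of a system M_j (j in an up-closed index set J) with transition maps
  f j k : M_j -> M_k: equivalence classes of pairs (j, x).\<close>
definition colim_carrier :: "int set \<Rightarrow> (int \<Rightarrow> 'b set) \<Rightarrow> (int \<times> 'b) set" where
  "colim_carrier J M = {p. fst p \<in> J \<and> snd p \<in> M (fst p)}"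

definition colim_class :: "int set \<Rightarrow> (int \<Rightarrow> 'b set) \<Rightarrow> (int \<Rightarrow> int \<Rightarrow> 'b \<Rightarrow> 'b) \<Rightarrow> int \<times> 'b \<Rightarrow> (int \<times> 'b) set" where
  "colim_class J M f p = {q \<in> colim_carrier J M.
      \<exists>k\<in>J. fst p \<le> k \<and> fst q \<le> k \<and> f (fst p) k (snd p) = f (fst q) k (snd q)}"

definition colim :: "int set \<Rightarrow> (int \<Rightarrow> 'b set) \<Rightarrow> (int \<Rightarrow> int \<Rightarrow> 'b \<Rightarrow> 'b) \<Rightarrow> (int \<times> 'b) set set" where
  "colim J M f = colim_class J M f ` colim_carrier J M"

definition colimLim where
  "colimLim H eta n = colim UNIV (\<lambda>j. limH H eta j n) (\<lambda>j k. limeta eta j k n)"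

definition colimH_class where
  "colimH_class H eta i n p = colim_class {i..} (\<lambda>j. H i j n) (\<lambda>j k. eta i j i k n) p"

text \<open>The interchange morphism kappa : colim_j lim_i H(i,j) -> lim_i colim_j H(i,j):
  the class of (j, x) goes to the family whose i-th entry (i <= j) is the class of (j, x_i);
  for i > j the entry is the image of x_j under H(j,j) -> H(i,i), as forced by compatibility.\<close>
definition kappa where
  "kappa H eta n C = (\<lambda>i. let p = (SOME p. p \<in> C); j = fst p; x = snd p in
      colimH_class H eta i n (max i j, eta (min i j) j i (max i j) n (x (min i j))))"

definition zero_source where
  "zero_source H eta n = colim_class UNIV (\<lambda>j. limH H eta j n) (\<lambda>j k. limeta eta j k n) (0, \<lambda>_. 0)"

definition zero_target where
  "zero_target H eta n = (\<lambda>i. colimH_class H eta i n (i, 0))"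

definition ker_kappa where
  "ker_kappa H eta n = {C \<in> colimLim H eta n. kappa H eta n C = zero_target H eta n}"

end

theory Submission
  imports Defs
begin

text \<open>A class in the kernel of \<kappa> is represented by a compatible family (x_i)_{i \<le> j} in
lim_i H(i,j) whose entries each die in some H(i,k_i). It suffices to find a single L such that every
x_i dies in H(i,L), for then the family dies in lim_i H(i,L). For i \<ge> min a j such an L is
inherited from x_{min a j} by compatibility. For smaller i, the vanishing of d^r_s for s - r \<le> a
and s > b says Z^r_s = Z^{r+1}_s there, and this lets one lower the index at which x_{i-1} dies,
one step at a time, down to any N \<ge> b at which x_i already dies.\<close>

lemma submodule_zero: "submodule sc M \<Longrightarrow> 0 \<in> M"
  unfolding submodule_def by blast

lemma submodule_diff: "submodule sc M \<Longrightarrow> x \<in> M \<Longrightarrow> y \<in> M \<Longrightarrow> x - y \<in> M"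
  unfolding submodule_def by (metis diff_conv_add_uminus)

lemma linmap_mem: "linmap sc M N f \<Longrightarrow> x \<in> M \<Longrightarrow> f x \<in> N"
  unfolding linmap_def by blast

lemma linmap_zero:
  assumes "submodule sc M" "linmap sc M N f"
  shows "f 0 = 0"
proof -
  have "f (0 + 0) = f 0 + f 0"
    using assms submodule_zero unfolding linmap_def by blast
  then show ?thesis by simp
qed

lemma linmap_diff:
  assumes M: "submodule sc M" and f: "linmap sc M N f" and "x \<in> M" "y \<in> M"
  shows "f (x - y) = f x - f y"
proof -
  have "f ((x - y) + y) = f (x - y) + f y"
    using assms submodule_diff[OF M] unfolding linmap_def by blast
  then show ?thesis by (simp add: algebra_simps)
qed

lemma mem_coset_of_self: "0 \<in> B \<Longrightarrow> x \<in> coset_of B x"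
  unfolding coset_of_def by (metis add.right_neutral image_eqI)

lemma uniform_bound_by_descent:
  fixes P :: "int \<Rightarrow> int \<Rightarrow> bool" and a b j :: int
  assumes mono: "\<And>i N N'. i \<le> j \<Longrightarrow> j \<le> N \<Longrightarrow> N \<le> N' \<Longrightarrow> P i N \<Longrightarrow> P i N'"
    and up: "\<And>i i' N. i \<le> i' \<Longrightarrow> i' \<le> j \<Longrightarrow> j \<le> N \<Longrightarrow> P i N \<Longrightarrow> P i' N"
    and descend: "\<And>i N. i \<le> a \<Longrightarrow> i \<le> j \<Longrightarrow> j \<le> N \<Longrightarrow> b \<le> N \<Longrightarrow> P i N \<Longrightarrow> P (i - 1) (N + 1) \<Longrightarrow> P (i - 1) N"
    and bounded: "\<And>i. i \<le> j \<Longrightarrow> \<exists>N\<ge>j. P i N"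
  shows "\<exists>L\<ge>j. \<forall>i\<le>j. P i L"
proof -
  define i0 where "i0 = min a j"
  obtain K where K: "j \<le> K" "P i0 K" using bounded[of i0] i0_def by auto
  define L where "L = max K (max b j)"
  have L: "j \<le> L" "b \<le> L" "K \<le> L" unfolding L_def by auto
  have below_i0: "P i L" if "i \<le> i0" for i
    using that
  proof (induction i rule: int_le_induct)
    case base
    show ?case using mono[OF _ K(1) L(3) K(2)] i0_def by simp
  next
    case (step i)
    have i: "i \<le> a" "i \<le> j" using step.hyps i0_def by auto
    have P_i: "P i N" if "L \<le> N" for N using mono[OF i(2) L(1) that step.IH] .
    obtain M where M: "j \<le> M" "P (i - 1) M" using bounded[of "i - 1"] i by auto
    have "L \<le> N \<longrightarrow> P (i - 1) N" if "N \<le> max M L" for N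
      using that
    proof (induction N rule: int_le_induct)
      case base
      show ?case using mono[OF _ M(1) _ M(2)] i by simp
    next
      case (step N)
      show ?case using descend[OF i, of "N - 1"] P_i[of "N - 1"] step.IH L by auto
    qed
    then show ?case by simp
  qed
  have "P i L" if "i \<le> j" for i
  proof (cases "i \<le> i0")
    case False
    then show ?thesis using up[OF _ that L(1) below_i0[OF order.refl]] by simp
  qed (rule below_i0)
  then show ?thesis using L(1) by blast
qed

definition eventually_vanishes :: "int set \<Rightarrow> (int \<Rightarrow> int \<Rightarrow> 'b \<Rightarrow> 'b) \<Rightarrow> 'b \<Rightarrow> int \<times> 'b \<Rightarrow> bool" where
  "eventually_vanishes J f z p \<longleftrightarrow> (\<exists>k\<in>J. fst p \<le> k \<and> f (fst p) k (snd p) = z)"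

locale directed_system =
  fixes J :: "int set" and M :: "int \<Rightarrow> 'b set" and f :: "int \<Rightarrow> int \<Rightarrow> 'b \<Rightarrow> 'b" and z :: 'b
  assumes up_closed: "k \<in> J \<Longrightarrow> k \<le> l \<Longrightarrow> l \<in> J"
    and transition_comp: "j \<in> J \<Longrightarrow> j \<le> k \<Longrightarrow> k \<le> l \<Longrightarrow> x \<in> M j \<Longrightarrow> f k l (f j k x) = f j l x"
    and transition_zero: "k \<in> J \<Longrightarrow> k \<le> l \<Longrightarrow> f k l z = z"
begin

abbreviation vanishes :: "int \<times> 'b \<Rightarrow> bool" where
  "vanishes \<equiv> eventually_vanishes J f z"

lemma vanishes_beyond:
  assumes p: "p \<in> colim_carrier J M" and K: "K \<in> J" "fst p \<le> K" "f (fst p) K (snd p) = z"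
    and "K \<le> l"
  shows "f (fst p) l (snd p) = z"
proof -
  have "f (fst p) l (snd p) = f K l (f (fst p) K (snd p))"
    using transition_comp[of "fst p" K l "snd p"] p K(2) assms(5) unfolding colim_carrier_def by simp
  then show ?thesis using transition_zero K assms(5) by simp
qed

lemma vanishes_if_related:
  assumes p: "p \<in> colim_carrier J M" and q: "q \<in> colim_carrier J M"
    and k: "k \<in> J" "fst p \<le> k" "fst q \<le> k" "f (fst p) k (snd p) = f (fst q) k (snd q)"
    and "vanishes q"
  shows "vanishes p"
proof -
  obtain K where K: "K \<in> J" "fst q \<le> K" "f (fst q) K (snd q) = z"
    using \<open>vanishes q\<close> unfolding eventually_vanishes_def by blast
  define l where "l = max k K"
  have l: "l \<in> J" "k \<le> l" "K \<le> l" using up_closed k(1) unfolding l_def by auto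
  have "f (fst p) l (snd p) = f k l (f (fst p) k (snd p))"
    using transition_comp[of "fst p" k l "snd p"] p k(2) l(2) unfolding colim_carrier_def by simp
  also have "\<dots> = f (fst q) l (snd q)"
    using transition_comp[of "fst q" k l "snd q"] q k(3,4) l(2) unfolding colim_carrier_def by simp
  also have "\<dots> = z" using vanishes_beyond[OF q K l(3)] .
  moreover have "fst p \<le> l" using k(2) l(2) by simp
  ultimately show ?thesis unfolding eventually_vanishes_def using l(1) by blast
qed

lemma colim_class_refl: "p \<in> colim_carrier J M \<Longrightarrow> p \<in> colim_class J M f p"
  unfolding colim_class_def colim_carrier_def by auto

lemma colim_class_of_vanishing:
  assumes p: "p \<in> colim_carrier J M" and "vanishes p"
  shows "colim_class J M f p = {q \<in> colim_carrier J M. vanishes q}"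
proof (intro set_eqI iffI)
  fix q assume "q \<in> colim_class J M f p"
  then show "q \<in> {q \<in> colim_carrier J M. vanishes q}"
    using vanishes_if_related[OF _ p _ _ _ _ \<open>vanishes p\<close>, of q] unfolding colim_class_def by auto
next
  fix q assume "q \<in> {q \<in> colim_carrier J M. vanishes q}"
  then have q: "q \<in> colim_carrier J M" "vanishes q" by auto
  obtain K where K: "K \<in> J" "fst p \<le> K" "f (fst p) K (snd p) = z"
    using \<open>vanishes p\<close> unfolding eventually_vanishes_def by blast
  obtain K' where K': "K' \<in> J" "fst q \<le> K'" "f (fst q) K' (snd q) = z"
    using q(2) unfolding eventually_vanishes_def by blast
  define l where "l = max K K'"
  have l: "l \<in> J" "K \<le> l" "K' \<le> l" using up_closed K(1) unfolding l_def by auto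
  have "fst p \<le> l" "fst q \<le> l" using K(2) K'(2) l by auto
  then show "q \<in> colim_class J M f p"
    unfolding colim_class_def using q(1) l(1) vanishes_beyond[OF p K l(2)] vanishes_beyond[OF q(1) K' l(3)]
    by auto
qed

end

locale cartan_eilenberg =
  fixes sc :: "'r::ring_1 \<Rightarrow> 'a::ab_group_add \<Rightarrow> 'a"
    and H :: "int \<Rightarrow> int \<Rightarrow> int \<Rightarrow> 'a set"
    and eta :: "int \<Rightarrow> int \<Rightarrow> int \<Rightarrow> int \<Rightarrow> int \<Rightarrow> 'a \<Rightarrow> 'a"
    and del :: "int \<Rightarrow> int \<Rightarrow> int \<Rightarrow> int \<Rightarrow> 'a \<Rightarrow> 'a"
  assumes CE: "CE_system sc H eta del"
begin

lemma submodule_H: "i \<le> j \<Longrightarrow> submodule sc (H i j n)"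
  using CE unfolding CE_system_def by (elim conjE) (simp only:)

lemma eta_linmap:
  "i \<le> j \<Longrightarrow> i \<le> i' \<Longrightarrow> j \<le> j' \<Longrightarrow> i' \<le> j' \<Longrightarrow> linmap sc (H i j n) (H i' j' n) (eta i j i' j' n)"
  using CE unfolding CE_system_def by (elim conjE) (simp only:)

lemma eta_id: "i \<le> j \<Longrightarrow> x \<in> H i j n \<Longrightarrow> eta i j i j n x = x"
  using CE unfolding CE_system_def by (elim conjE) (simp only:)

lemma eta_comp:
  "i \<le> j \<Longrightarrow> i \<le> i' \<Longrightarrow> j \<le> j' \<Longrightarrow> i' \<le> j' \<Longrightarrow> i' \<le> i'' \<Longrightarrow> j' \<le> j'' \<Longrightarrow> i'' \<le> j''
   \<Longrightarrow> x \<in> H i j n \<Longrightarrow> eta i' j' i'' j'' n (eta i j i' j' n x) = eta i j i'' j'' n x"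
  using CE unfolding CE_system_def by (elim conjE) (simp only:)

lemma del_linmap: "i \<le> j \<Longrightarrow> j \<le> k \<Longrightarrow> linmap sc (H j k n) (H i j (n - 1)) (del i j k n)"
  using CE unfolding CE_system_def by (elim conjE) (simp only:)

lemma eta_del_natural:
  "i \<le> j \<Longrightarrow> j \<le> k \<Longrightarrow> i' \<le> j' \<Longrightarrow> j' \<le> k' \<Longrightarrow> i \<le> i' \<Longrightarrow> j \<le> j' \<Longrightarrow> k \<le> k'
   \<Longrightarrow> x \<in> H j k n \<Longrightarrow> eta i j i' j' (n - 1) (del i j k n x) = del i' j' k' n (eta j k j' k' n x)"
  using CE unfolding CE_system_def by (elim conjE) (simp only:)

lemma ker_eta_eq_image_eta:
  "i \<le> j \<Longrightarrow> j \<le> k \<Longrightarrow> {y \<in> H i k n. eta i k j k n y = 0} = eta i j i k n ` H i j n"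
  using CE unfolding CE_system_def exact_at_def by (elim conjE) (simp only:)

lemma ker_del_eq_image_eta:
  "i \<le> j \<Longrightarrow> j \<le> k \<Longrightarrow> {y \<in> H j k n. del i j k n y = 0} = eta i k j k n ` H i k n"
  using CE unfolding CE_system_def exact_at_def by (elim conjE) (simp only:)

lemma ker_eta_eq_image_del:
  "i \<le> j \<Longrightarrow> j \<le> k \<Longrightarrow> {y \<in> H i j n. eta i j i k n y = 0} = del i j k (n + 1) ` H j k (n + 1)"
  using CE unfolding CE_system_def exact_at_def by (elim conjE) (simp only:)

lemma eta_mem:
  "i \<le> j \<Longrightarrow> i \<le> i' \<Longrightarrow> j \<le> j' \<Longrightarrow> i' \<le> j' \<Longrightarrow> x \<in> H i j n \<Longrightarrow> eta i j i' j' n x \<in> H i' j' n"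
  using eta_linmap linmap_mem by metis

lemma eta_zero: "i \<le> j \<Longrightarrow> i \<le> i' \<Longrightarrow> j \<le> j' \<Longrightarrow> i' \<le> j' \<Longrightarrow> eta i j i' j' n 0 = 0"
  using eta_linmap submodule_H linmap_zero by metis

lemma eta_diff:
  "i \<le> j \<Longrightarrow> i \<le> i' \<Longrightarrow> j \<le> j' \<Longrightarrow> i' \<le> j' \<Longrightarrow> x \<in> H i j n \<Longrightarrow> y \<in> H i j n
   \<Longrightarrow> eta i j i' j' n (x - y) = eta i j i' j' n x - eta i j i' j' n y"
  using eta_linmap submodule_H linmap_diff by metis

lemma del_mem: "i \<le> j \<Longrightarrow> j \<le> k \<Longrightarrow> x \<in> H j k n \<Longrightarrow> del i j k n x \<in> H i j (n - 1)"
  using del_linmap linmap_mem by metis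

lemma del_zero: "i \<le> j \<Longrightarrow> j \<le> k \<Longrightarrow> del i j k n 0 = 0"
  using del_linmap submodule_H linmap_zero by metis

lemma del_diff:
  "i \<le> j \<Longrightarrow> j \<le> k \<Longrightarrow> x \<in> H j k n \<Longrightarrow> y \<in> H j k n
   \<Longrightarrow> del i j k n (x - y) = del i j k n x - del i j k n y"
  using del_linmap submodule_H linmap_diff by metis

lemma zero_mem_H: "i \<le> j \<Longrightarrow> 0 \<in> H i j n"
  using submodule_H submodule_zero by metis

lemma H_diagonal_zero: "x \<in> H i i n \<Longrightarrow> x = 0"
  using ker_eta_eq_image_eta[of i i i n] eta_id[of i i x n] by force

lemma eta_through_diagonal_zero: "i \<le> j \<Longrightarrow> j \<le> k \<Longrightarrow> x \<in> H i j n \<Longrightarrow> eta i j j k n x = 0"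
proof -
  assume ij: "i \<le> j" and jk: "j \<le> k" and x: "x \<in> H i j n"
  have "eta i j j k n x = eta j j j k n (eta i j j j n x)"
    using eta_comp[OF ij _ _ _ _ jk _ x, of j j] ij jk by simp
  also have "eta i j j j n x = 0"
    using H_diagonal_zero eta_mem[OF ij ij order.refl order.refl x] by blast
  finally show ?thesis using eta_zero[of j j j k n] jk by simp
qed

lemma lift_of_del_zero: "i \<le> j \<Longrightarrow> j \<le> k \<Longrightarrow> y \<in> H j k n \<Longrightarrow> del i j k n y = 0 \<Longrightarrow> \<exists>x\<in>H i k n. y = eta i k j k n x"
  using ker_del_eq_image_eta by blast

lemma del_eta_zero: "i \<le> j \<Longrightarrow> j \<le> k \<Longrightarrow> x \<in> H i k n \<Longrightarrow> del i j k n (eta i k j k n x) = 0"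
  using ker_del_eq_image_eta by blast

lemma preimage_of_eta_zero:
  "i \<le> j \<Longrightarrow> j \<le> k \<Longrightarrow> y \<in> H i j n \<Longrightarrow> eta i j i k n y = 0 \<Longrightarrow> \<exists>x\<in>H j k (n + 1). y = del i j k (n + 1) x"
  using ker_eta_eq_image_del by blast

lemma eta_del_zero: "i \<le> j \<Longrightarrow> j \<le> k \<Longrightarrow> x \<in> H j k (n + 1) \<Longrightarrow> eta i j i k n (del i j k (n + 1) x) = 0"
  using ker_eta_eq_image_del by blast

lemma del_del_zero:
  assumes "i \<le> j" "j \<le> k" "k \<le> l" "x \<in> H k l (n + 1)"
  shows "del i j k n (del j k l (n + 1) x) = 0"
proof -
  have dx: "del j k l (n + 1) x \<in> H j k n" using del_mem[of j k l x "n + 1"] assms by simp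
  have "del i j k n (del j k l (n + 1) x) = eta i j i j (n - 1) (del i j k n (del j k l (n + 1) x))"
    using eta_id del_mem[OF _ _ dx] assms by simp
  also have "\<dots> = del i j l n (eta j k j l n (del j k l (n + 1) x))"
    using eta_del_natural[OF _ _ _ _ order.refl order.refl _ dx] assms by simp
  also have "eta j k j l n (del j k l (n + 1) x) = 0" using eta_del_zero assms by simp
  finally show ?thesis using del_zero assms by simp
qed

lemma zero_mem_Br:
  assumes "1 \<le> r"
  shows "0 \<in> Br H del r s n"
proof -
  have "del (s - 1) s (s + r - 1) (n + 1) 0 = 0" using del_zero assms by simp
  moreover have "0 \<in> H s (s + r - 1) (n + 1)" using zero_mem_H assms by simp
  ultimately show ?thesis unfolding Br_def by (metis image_eqI)
qed

lemma Br_subset_Zr: "1 \<le> r \<Longrightarrow> 1 \<le> r' \<Longrightarrow> Br H del r s n \<subseteq> Zr H del r' s n"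
  unfolding Br_def Zr_def using del_mem[of "s - 1" s "s + r - 1" _ "n + 1"] del_del_zero[of "s - r'" "s - 1" s "s + r - 1" _ n]
  by auto

lemma Zr_diff: "1 \<le> r \<Longrightarrow> x \<in> Zr H del r s n \<Longrightarrow> y \<in> Zr H del r s n \<Longrightarrow> x - y \<in> Zr H del r s n"
  unfolding Zr_def using submodule_diff[OF submodule_H] del_diff[of "s - r" "s - 1" s x n y] by auto

(* For i = s - r: a cycle x = eta y in Z^r_s with d^r [x] = 0 lies in Z^{r+1}_s.  The lift y is
   corrected by the image of a preimage of del y, which dies in H(s-1,s) via H(s-1,s-1) = 0. *)
lemma boundary_differential_lifts:
  assumes i_lt: "i < s" and y: "y \<in> H i s n"
    and boundary: "del (i - 1) i s n y \<in> del (i - 1) i (s - 1) n ` H i (s - 1) n"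
  shows "del (i - 1) (s - 1) s n (eta i s (s - 1) s n y) = 0"
proof -
  obtain v where v: "v \<in> H i (s - 1) n" "del (i - 1) i s n y = del (i - 1) i (s - 1) n v"
    using boundary by blast
  have ev: "eta i (s - 1) i s n v \<in> H i s n" using eta_mem v(1) i_lt by simp
  have "del (i - 1) i s n (eta i (s - 1) i s n v) = eta (i - 1) i (i - 1) i (n - 1) (del (i - 1) i (s - 1) n v)"
    using eta_del_natural[of "i - 1" i "s - 1" "i - 1" i s v n] v(1) i_lt by simp
  also have "\<dots> = del (i - 1) i (s - 1) n v" using eta_id del_mem v(1) i_lt by simp
  finally have "del (i - 1) i s n (y - eta i (s - 1) i s n v) = 0"
    using del_diff[OF _ _ y ev] v(2) i_lt by simp
  then obtain t where t: "t \<in> H (i - 1) s n" "y - eta i (s - 1) i s n v = eta (i - 1) s i s n t"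
    using lift_of_del_zero[OF _ _ submodule_diff[OF submodule_H y ev], of "i - 1"] i_lt by auto
  have "eta i s (s - 1) s n (eta i (s - 1) i s n v) = eta i (s - 1) (s - 1) s n v"
    using eta_comp v(1) i_lt by simp
  also have "\<dots> = 0" using eta_through_diagonal_zero v(1) i_lt by simp
  finally have "eta i s (s - 1) s n y = eta i s (s - 1) s n (y - eta i (s - 1) i s n v)"
    using eta_diff[OF _ _ _ _ y ev] i_lt by simp
  also have "\<dots> = eta (i - 1) s (s - 1) s n t" using t eta_comp i_lt by simp
  finally show ?thesis using del_eta_zero t(1) i_lt by simp
qed

(* The representative picked by dr differs from w by an element of B^r_s, which lies in Z^{r+1}_s. *)
lemma Zr_succ_if_dr_vanishes:
  assumes r: "1 \<le> r"
    and dr_zero: "\<forall>X\<in>Er H del r s n. dr H eta del r s n X = Br H del r (s - r) (n - 1)"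
  shows "Zr H del r s n \<subseteq> Zr H del (r + 1) s n"
proof
  fix w assume w: "w \<in> Zr H del r s n"
  define X where "X = coset_of (Br H del r s n) w"
  have X: "X \<in> Er H del r s n" unfolding Er_def X_def using w by blast
  have "w \<in> X" unfolding X_def using mem_coset_of_self zero_mem_Br r by blast
  define x where "x = (SOME x. x \<in> X \<and> x \<in> Zr H del r s n)"
  have x: "x \<in> X \<and> x \<in> Zr H del r s n"
    unfolding x_def using someI[of "\<lambda>x. x \<in> X \<and> x \<in> Zr H del r s n" w] w \<open>w \<in> X\<close> by blast
  then obtain \<beta> where \<beta>: "\<beta> \<in> Br H del r s n" "x = w + \<beta>"
    unfolding X_def coset_of_def by auto
  have "\<exists>y\<in>H (s - r) s n. x = eta (s - r) s (s - 1) s n y"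
    using x lift_of_del_zero[of "s - r" "s - 1" s x n] r unfolding Zr_def by auto
  then obtain y0 where "y0 \<in> H (s - r) s n \<and> eta (s - r) s (s - 1) s n y0 = x" by auto
  define y where "y = (SOME y. y \<in> H (s - r) s n \<and> eta (s - r) s (s - 1) s n y = x)"
  have y: "y \<in> H (s - r) s n \<and> eta (s - r) s (s - 1) s n y = x"
    unfolding y_def by (rule someI) fact
  have "dr H eta del r s n X = coset_of (Br H del r (s - r) (n - 1)) (del (s - r - 1) (s - r) s n y)"
    unfolding dr_def x_def[symmetric] y_def ..
  then have "coset_of (Br H del r (s - r) (n - 1)) (del (s - r - 1) (s - r) s n y) = Br H del r (s - r) (n - 1)"
    using dr_zero X by simp
  then have "del (s - r - 1) (s - r) s n y \<in> Br H del r (s - r) (n - 1)"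
    using mem_coset_of_self[OF zero_mem_Br[OF r]] by metis
  then have "x \<in> Zr H del (r + 1) s n"
    using boundary_differential_lifts[of "s - r" s y n] x y r unfolding Br_def Zr_def by (simp add: diff_diff_eq)
  moreover have "\<beta> \<in> Zr H del (r + 1) s n" using Br_subset_Zr[of r "r + 1"] \<beta>(1) r by auto
  ultimately show "w \<in> Zr H del (r + 1) s n" using Zr_diff[of "r + 1"] \<beta>(2) r by force
qed

(* u = del w, and w lies in Z^{N+1-i}_{N+1}; stability puts it in Z^{N+2-i}_{N+1}, i.e. del w = 0. *)
lemma eq_zero_if_etas_vanish:
  assumes "i \<le> N" and u: "u \<in> H (i - 1) N n"
    and "eta (i - 1) N (i - 1) (N + 1) n u = 0" and "eta (i - 1) N i N n u = 0"
    and Z_stable: "Zr H del (N + 1 - i) (N + 1) (n + 1) \<subseteq> Zr H del (N + 1 - i + 1) (N + 1) (n + 1)"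
  shows "u = 0"
proof -
  obtain w where w: "w \<in> H N (N + 1) (n + 1)" "u = del (i - 1) N (N + 1) (n + 1) w"
    using preimage_of_eta_zero[of "i - 1" N "N + 1" u n] assms by auto
  have "del i N (N + 1) (n + 1) w = eta (i - 1) N i N n u"
    using eta_del_natural[of "i - 1" N "N + 1" i N "N + 1" w "n + 1"] eta_id w assms(1) by simp
  then have "w \<in> Zr H del (N + 1 - i) (N + 1) (n + 1)" unfolding Zr_def using w assms by simp
  then show "u = 0" using Z_stable w(2) unfolding Zr_def by auto
qed

abbreviation vanishes_lim :: "int \<Rightarrow> int \<times> (int \<Rightarrow> 'a) \<Rightarrow> bool" where
  "vanishes_lim n \<equiv> eventually_vanishes UNIV (\<lambda>j k. limeta eta j k n) (\<lambda>_. 0)"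

abbreviation vanishes_colim :: "int \<Rightarrow> int \<Rightarrow> int \<times> 'a \<Rightarrow> bool" where
  "vanishes_colim i n \<equiv> eventually_vanishes {i..} (\<lambda>j k. eta i j i k n) 0"

lemma limH_mem: "x \<in> limH H eta j n \<Longrightarrow> i \<le> j \<Longrightarrow> x i \<in> H i j n"
  unfolding limH_def by blast

lemma limH_compat:
  assumes x: "x \<in> limH H eta j n" and "i \<le> i'" "i' \<le> j"
  shows "x i' = eta i j i' j n (x i)"
  using assms(2,3)
proof (induction i' rule: int_ge_induct)
  case base
  then show ?case using eta_id limH_mem[OF x] by simp
next
  case (step k)
  have "x (k + 1) = eta (k + 1 - 1) j (k + 1) j n (x (k + 1 - 1))"
    using x step.prems unfolding limH_def by blast
  also have "\<dots> = eta k j (k + 1) j n (eta i j k j n (x i))" using step by simp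
  also have "\<dots> = eta i j (k + 1) j n (x i)" using eta_comp limH_mem[OF x] step by simp
  finally show ?case .
qed

lemma zero_mem_limH: "(\<lambda>_. 0) \<in> limH H eta j n"
  unfolding limH_def using zero_mem_H eta_zero by simp

lemma limeta_comp:
  assumes x: "x \<in> limH H eta j n" and "j \<le> k" "k \<le> l"
  shows "limeta eta k l n (limeta eta j k n x) = limeta eta j l n x"
proof
  fix i
  have "eta (min i k) k i l n (eta (min i j) j (min i k) k n (x (min i j))) = eta (min i j) j i l n (x (min i j))"
    if "i \<le> l" using eta_comp limH_mem[OF x] assms(2,3) that by simp
  then show "limeta eta k l n (limeta eta j k n x) i = limeta eta j l n x i"
    unfolding limeta_def using assms(2) by (simp add: min_absorb2 min.assoc)
qed

lemma limeta_zero: "k \<le> l \<Longrightarrow> limeta eta k l n (\<lambda>_. 0) = (\<lambda>_. 0)"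
  unfolding limeta_def by (rule ext) (simp add: eta_zero)

lemma directed_system_limH: "directed_system UNIV (\<lambda>j. limH H eta j n) (\<lambda>j k. limeta eta j k n) (\<lambda>_. 0)"
  by unfold_locales (simp_all add: limeta_comp limeta_zero)

lemma directed_system_colimH: "directed_system {i..} (\<lambda>j. H i j n) (\<lambda>j k. eta i j i k n) 0"
  by unfold_locales (simp_all add: eta_comp eta_zero)

lemma kappa_component_vanishes:
  assumes x: "x \<in> limH H eta j n" and "vanishes_lim n (j, x)"
  shows "vanishes_colim i n (max i j, eta (min i j) j i (max i j) n (x (min i j)))"
proof -
  obtain k where k: "j \<le> k" "limeta eta j k n x = (\<lambda>_. 0)"
    using assms(2) unfolding eventually_vanishes_def by auto
  define K where "K = max k (max i j)"
  have "eta i (max i j) i K n (eta (min i j) j i (max i j) n (x (min i j))) = eta (min i j) j i K n (x (min i j))"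
    using eta_comp limH_mem[OF x] unfolding K_def by simp
  also have "\<dots> = limeta eta j K n x i" unfolding limeta_def K_def by (simp add: le_max_iff_disj)
  also have "\<dots> = limeta eta k K n (limeta eta j k n x) i" using limeta_comp[OF x] k(1) K_def by simp
  also have "\<dots> = 0" using k(2) limeta_zero K_def by simp
  finally show ?thesis unfolding eventually_vanishes_def by (intro bexI[where x = K]) (auto simp: K_def)
qed

lemma zero_source_eq_vanishing: "zero_source H eta n = {q \<in> colim_carrier UNIV (\<lambda>j. limH H eta j n). vanishes_lim n q}"
  unfolding zero_source_def
  by (rule directed_system.colim_class_of_vanishing[OF directed_system_limH])
    (auto simp: colim_carrier_def zero_mem_limH eventually_vanishes_def limeta_zero)

lemma zero_target_eq_vanishing: "zero_target H eta n i = {q \<in> colim_carrier {i..} (\<lambda>j. H i j n). vanishes_colim i n q}"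
  unfolding zero_target_def colimH_class_def
  by (rule directed_system.colim_class_of_vanishing[OF directed_system_colimH])
    (auto simp: colim_carrier_def zero_mem_H eventually_vanishes_def eta_zero)

lemma zero_source_mem_colimLim: "zero_source H eta n \<in> colimLim H eta n"
  unfolding zero_source_def colimLim_def colim_def by (intro imageI) (simp add: colim_carrier_def zero_mem_limH)

lemma kappa_zero_source: "kappa H eta n (zero_source H eta n) = zero_target H eta n"
proof
  fix i
  define p where "p = (SOME p. p \<in> zero_source H eta n)"
  have "(0, \<lambda>_. 0) \<in> zero_source H eta n"
    unfolding zero_source_eq_vanishing eventually_vanishes_def by (auto simp: colim_carrier_def zero_mem_limH limeta_zero)
  then have "p \<in> zero_source H eta n" unfolding p_def by (rule someI)
  then have x: "snd p \<in> limH H eta (fst p) n" "vanishes_lim n (fst p, snd p)"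
    unfolding zero_source_eq_vanishing colim_carrier_def by auto
  let ?q = "(max i (fst p), eta (min i (fst p)) (fst p) i (max i (fst p)) n (snd p (min i (fst p))))"
  have "?q \<in> colim_carrier {i..} (\<lambda>j. H i j n)"
    unfolding colim_carrier_def using eta_mem limH_mem[OF x(1)] by simp
  then show "kappa H eta n (zero_source H eta n) i = zero_target H eta n i"
    unfolding kappa_def Let_def p_def[symmetric] colimH_class_def zero_target_eq_vanishing
    using directed_system.colim_class_of_vanishing[OF directed_system_colimH _ kappa_component_vanishes[OF x]]
    by simp
qed

end

locale cartan_eilenberg_corner = cartan_eilenberg +
  fixes a b :: int
  assumes dr_vanishing: "\<forall>r s n. 1 \<le> r \<and> s - r \<le> a \<and> b < s \<longrightarrow>
    (\<forall>X \<in> Er H del r s n. dr H eta del r s n X = Br H del r (s - r) (n - 1))"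
begin

lemma Zr_stable_in_corner:
  "i \<le> a \<Longrightarrow> b \<le> N \<Longrightarrow> i \<le> N \<Longrightarrow> Zr H del (N + 1 - i) (N + 1) m \<subseteq> Zr H del (N + 1 - i + 1) (N + 1) m"
proof -
  assume "i \<le> a" "b \<le> N" "i \<le> N"
  then have "1 \<le> N + 1 - i" "(N + 1) - (N + 1 - i) \<le> a" "b < N + 1" by auto
  then show ?thesis using Zr_succ_if_dr_vanishes[of "N + 1 - i" "N + 1" m] dr_vanishing by blast
qed

lemma limH_uniform_vanishing:
  assumes x: "x \<in> limH H eta j n" and bounded: "\<And>i. i \<le> j \<Longrightarrow> \<exists>N\<ge>j. eta i j i N n (x i) = 0"
  shows "\<exists>L\<ge>j. \<forall>i\<le>j. eta i j i L n (x i) = 0"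
proof (rule uniform_bound_by_descent[where a = a and b = b])
  fix i N N' assume "i \<le> j" "j \<le> N" "N \<le> N'" "eta i j i N n (x i) = 0"
  then show "eta i j i N' n (x i) = 0"
    using eta_comp[of i j i N i N' "x i" n] limH_mem[OF x] eta_zero[of i N i N' n] by simp
next
  fix i i' N assume h: "i \<le> i'" "i' \<le> j" "j \<le> N" "eta i j i N n (x i) = 0"
  have "eta i' j i' N n (x i') = eta i j i' N n (x i)"
    using limH_compat[OF x h(1,2)] eta_comp limH_mem[OF x] h(1-3) by simp
  also have "\<dots> = eta i N i' N n (eta i j i N n (x i))"
    using eta_comp limH_mem[OF x] h(1-3) by simp
  finally show "eta i' j i' N n (x i') = 0" using eta_zero h by simp
next
  fix i N assume h: "i \<le> a" "i \<le> j" "j \<le> N" "b \<le> N" "eta i j i N n (x i) = 0"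
    "eta (i - 1) j (i - 1) (N + 1) n (x (i - 1)) = 0"
  define u where "u = eta (i - 1) j (i - 1) N n (x (i - 1))"
  have xi: "x (i - 1) \<in> H (i - 1) j n" using limH_mem[OF x] h(2) by simp
  have u: "u \<in> H (i - 1) N n" unfolding u_def using eta_mem xi h by simp
  have "eta (i - 1) N (i - 1) (N + 1) n u = 0"
    unfolding u_def using eta_comp xi h by simp
  moreover have "eta (i - 1) N i N n u = eta i j i N n (x i)"
    unfolding u_def using eta_comp xi h limH_compat[OF x, of "i - 1" i] by simp
  ultimately show "eta (i - 1) j (i - 1) N n (x (i - 1)) = 0"
    using eq_zero_if_etas_vanish[OF _ u] Zr_stable_in_corner h unfolding u_def by simp
qed (fact bounded)

lemma vanishes_lim_if_components_vanish:
  assumes x: "x \<in> limH H eta j n" and components: "\<And>i. i \<le> j \<Longrightarrow> vanishes_colim i n (j, x i)"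
  shows "vanishes_lim n (j, x)"
proof -
  obtain L where L: "j \<le> L" "\<forall>i\<le>j. eta i j i L n (x i) = 0"
    using limH_uniform_vanishing[OF x] components unfolding eventually_vanishes_def by auto
  have "limeta eta j L n x i = 0" for i
  proof (cases "i \<le> j")
    case False
    have "x j = 0" using H_diagonal_zero limH_mem[OF x, of j] by simp
    then show ?thesis unfolding limeta_def using False eta_zero L(1) by simp
  qed (use L in \<open>simp add: limeta_def\<close>)
  then show ?thesis unfolding eventually_vanishes_def using L(1) by auto
qed

lemma eq_zero_source_if_kappa_zero:
  assumes C: "C \<in> colimLim H eta n" and kappa_C: "kappa H eta n C = zero_target H eta n"
  shows "C = zero_source H eta n"
proof -
  interpret L: directed_system UNIV "\<lambda>j. limH H eta j n" "\<lambda>j k. limeta eta j k n" "\<lambda>_. 0"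
    by (rule directed_system_limH)
  obtain p0 where p0: "p0 \<in> colim_carrier UNIV (\<lambda>j. limH H eta j n)"
    "C = colim_class UNIV (\<lambda>j. limH H eta j n) (\<lambda>j k. limeta eta j k n) p0"
    using C unfolding colimLim_def colim_def by auto
  define p where "p = (SOME p. p \<in> C)"
  have "p \<in> C" unfolding p_def using L.colim_class_refl[OF p0(1)] p0(2) by (metis someI)
  then obtain k where p: "p \<in> colim_carrier UNIV (\<lambda>j. limH H eta j n)" "fst p0 \<le> k" "fst p \<le> k"
    "limeta eta (fst p0) k n (snd p0) = limeta eta (fst p) k n (snd p)"
    using p0(2) unfolding colim_class_def by auto
  have x: "snd p \<in> limH H eta (fst p) n" using p(1) unfolding colim_carrier_def by simp
  have "vanishes_colim i n (fst p, snd p i)" if i: "i \<le> fst p" for i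
  proof -
    have "kappa H eta n C i = colimH_class H eta i n (fst p, snd p i)"
      unfolding kappa_def Let_def p_def[symmetric] using i eta_id limH_mem[OF x i] by (simp add: max_def min_def)
    moreover have "(fst p, snd p i) \<in> colimH_class H eta i n (fst p, snd p i)"
      unfolding colimH_class_def using directed_system.colim_class_refl[OF directed_system_colimH] limH_mem[OF x i] i
      by (simp add: colim_carrier_def)
    ultimately show ?thesis using kappa_C zero_target_eq_vanishing by auto
  qed
  then have "vanishes_lim n p" using vanishes_lim_if_components_vanish[OF x] by simp
  then have "vanishes_lim n p0" using L.vanishes_if_related[OF p0(1) p(1) _ p(2-4)] by simp
  then show ?thesis using p0 L.colim_class_of_vanishing zero_source_eq_vanishing by simp
qed

end

theorem proposition5p3:
  fixes sc :: "'r::ring_1 \<Rightarrow> 'a::ab_group_add \<Rightarrow> 'a"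
    and H :: "int \<Rightarrow> int \<Rightarrow> int \<Rightarrow> 'a set"
    and eta :: "int \<Rightarrow> int \<Rightarrow> int \<Rightarrow> int \<Rightarrow> int \<Rightarrow> 'a \<Rightarrow> 'a"
    and del :: "int \<Rightarrow> int \<Rightarrow> int \<Rightarrow> int \<Rightarrow> 'a \<Rightarrow> 'a"
    and a b :: int
  assumes "CE_system sc H eta del"
    and "\<forall>r s n. 1 \<le> r \<and> s - r \<le> a \<and> b < s \<longrightarrow>
           (\<forall>X \<in> Er H del r s n. dr H eta del r s n X = Br H del r (s - r) (n - 1))"
  shows "\<forall>n. ker_kappa H eta n = {zero_source H eta n}"
proof
  fix n
  interpret cartan_eilenberg_corner sc H eta del a b
    using assms by (simp add: cartan_eilenberg_corner_def cartan_eilenberg_def cartan_eilenberg_corner_axioms_def)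
  show "ker_kappa H eta n = {zero_source H eta n}"
    unfolding ker_kappa_def using zero_source_mem_colimLim kappa_zero_source eq_zero_source_if_kappa_zero by auto
qed

end
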